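(* Let $f:(0,\infty)\to\mathbb{R}$ be such that $-f'$ is completely monotone on $(0,\infty)$, and suppose $\int_0^{t_0}|f(t)|t^\beta\,\mathrm{d}t<\infty$ for some $\beta\in(-1,\infty)$ and $t_0>0$. Then for any $\alpha\in[0,1]$, $m,n\in\mathbb{N}^\star$ and $c_1,c_2>0$, $$\int_0^{t_0}|f^{(m)}(c_1t)|^\alpha|f^{(n)}(c_2t)|^{1-\alpha}t^{m\alpha+n(1-\alpha)+\beta}\,\mathrm{d}t\le C\Big(\int_0^{t_0}|f(t)|t^\beta\,\mathrm{d}t+|f(t_0)|t_0^{1+\beta}\Big)$$ and $$\int_0^{t_0}|f(c_1t)|^\alpha|f^{(n)}(c_2t)|^{1-\alpha}t^{n(1-\alpha)+\beta}\,\mathrm{d}t\le C\Big(\int_0^{(c_1\vee1)t_0}|f(t)|t^\beta\,\mathrm{d}t+|f(t_0)|t_0^{1+\beta}\Big),$$ where $c_1\vee1=\max\{c_1,1\}$ and $C>0$ depends only on $m,n,\alpha,\beta,c_1,c_2$.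
   Context: A function $g:(0,\infty)\to\mathbb{R}$ is completely monotone if it is $C^\infty$ and $(-1)^ng^{(n)}(t)\ge0$ for all $t>0$ and $n\in\mathbb{N}$. *)

theory Defs
  imports "HOL-Analysis.Analysis"
begin

definition completely_monotone :: "(real \<Rightarrow> real) \<Rightarrow> bool" where
  "completely_monotone g \<longleftrightarrow>
     (\<forall>n. \<forall>t>0. ((deriv ^^ n) g) differentiable (at t)) \<and>
     (\<forall>n. \<forall>t>0. (-1) ^ n * (deriv ^^ n) g t \<ge> 0)"

text \<open>Real power of a nonnegative base with the convention x^0 = 1 (also for x = 0),
  unlike Isabelle's powr where 0 powr 0 = 0.\<close>
definition npow :: "real \<Rightarrow> real \<Rightarrow> real" where
  "npow x a = (if a = 0 then 1 else x powr a)"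

end

theory Submission
  imports Defs
begin

(*
  Since -f' is completely monotone, each (-1)^k f^(k) with k >= 1 is nonnegative and decreasing,
  so f is decreasing and convex on (0, inf).  The mean value theorem on [s/2, s] therefore gives
  |f^(k+1)(s)| s/2 <= |f^(k)(s/2)|, and iterating down to f,
  |f^(k)(s)| s^k <= 2^(1+...+k) (|f(s/2^k)| + |f(s/2^(k-1))|).  Hence the weighted integral of
  |f^(k)(ct)| t^(k+beta) is controlled by weighted integrals of dilates |f(dt)| t^beta.  Where
  dt < t0 a dilate is handled by substitution; where dt >= t0 convexity gives
  |f(dt)| <= |f(t0)| + (dt - t0) |f'(t0)|, with t0 |f'(t0)| <= 2 (|f(t0/2)| + |f(t0)|), and
  |f(t0/2)| is at most |f(t0)| plus the weighted mean of |f| over (0, t0/2) because f is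
  decreasing.  Finally the mixed integrands are split by x^alpha y^(1-alpha) <= x + y.
*)

definition weighted_L1 :: "real \<Rightarrow> (real \<Rightarrow> real) \<Rightarrow> real \<Rightarrow> ennreal" where
  "weighted_L1 \<beta> g T = (\<integral>\<^sup>+ t \<in> {0<..<T}. ennreal (\<bar>g t\<bar> * t powr \<beta>) \<partial>lborel)"

definition weighted_L1_with_endpoint :: "real \<Rightarrow> (real \<Rightarrow> real) \<Rightarrow> real \<Rightarrow> ennreal" where
  "weighted_L1_with_endpoint \<beta> g T = weighted_L1 \<beta> g T + ennreal (\<bar>g T\<bar> * T powr (1 + \<beta>))"

lemma weighted_L1_integrand_measurable:
  assumes "continuous_on {0<..} g"
  shows "(\<lambda>t. ennreal (\<bar>g t\<bar> * t powr \<beta>) * indicator {0<..<T} t) \<in> borel_measurable borel"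
proof -
  have "continuous_on {0<..<T} g"
    using assms by (rule continuous_on_subset) auto
  then have "continuous_on {0<..<T} (\<lambda>t. \<bar>g t\<bar> * t powr \<beta>)"
    by (auto intro!: continuous_intros)
  then have "(\<lambda>t. indicator {0<..<T} t *\<^sub>R (\<bar>g t\<bar> * t powr \<beta>)) \<in> borel_measurable borel"
    by (intro borel_measurable_continuous_on_indicator) auto
  then have "(\<lambda>t. ennreal (indicator {0<..<T} t *\<^sub>R (\<bar>g t\<bar> * t powr \<beta>))) \<in> borel_measurable borel"
    by measurable
  moreover have "(\<lambda>t. ennreal (indicator {0<..<T} t *\<^sub>R (\<bar>g t\<bar> * t powr \<beta>)))
                   = (\<lambda>t. ennreal (\<bar>g t\<bar> * t powr \<beta>) * indicator {0<..<T} t)"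
    by (auto simp: indicator_def)
  ultimately show ?thesis
    by metis
qed

lemma weighted_L1_mono:
  assumes "T \<le> T'"
  shows "weighted_L1 \<beta> g T \<le> weighted_L1 \<beta> g T'"
  unfolding weighted_L1_def using assms
  by (intro nn_integral_mono mult_left_mono) (auto simp: indicator_def)

lemma weighted_L1_const:
  assumes "\<beta> > -1" "T > 0"
  shows "weighted_L1 \<beta> (\<lambda>_. c) T = ennreal (\<bar>c\<bar> * (T powr (1 + \<beta>) / (1 + \<beta>)))"
proof -
  have "((\<lambda>t. t powr \<beta>) has_integral (T powr (1 + \<beta>) / (1 + \<beta>))) {0..T}"
    using has_integral_powr_from_0[of \<beta> T] assms by (simp add: add.commute)
  then have "((\<lambda>t. \<bar>c\<bar> * t powr \<beta>) has_integral (\<bar>c\<bar> * (T powr (1 + \<beta>) / (1 + \<beta>)))) {0<..<T}"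
    by (intro has_integral_mult_right) (simp add: has_integral_Icc_iff_Ioo)
  then show ?thesis
    unfolding weighted_L1_def by (intro nn_integral_has_integral_lebesgue') auto
qed

lemma weighted_L1_compose_scale:
  assumes "d > 0" "continuous_on {0<..} g"
  shows "weighted_L1 \<beta> (\<lambda>t. g (d * t)) T = ennreal (d powr (-1 - \<beta>)) * weighted_L1 \<beta> g (d * T)"
proof -
  define G where "G = (\<lambda>s. ennreal (\<bar>g s\<bar> * s powr \<beta>) * indicator {0<..<d * T} s)"
  have "continuous_on {0<..} (\<lambda>t. g (d * t))"
    using assms by (intro continuous_on_compose2[OF assms(2)]) (auto intro!: continuous_intros)
  have "G (d * t) = ennreal (d powr \<beta>) * (ennreal (\<bar>g (d * t)\<bar> * t powr \<beta>) * indicator {0<..<T} t)"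
    for t
    using assms(1)
    by (auto simp: G_def indicator_def powr_mult ennreal_mult' zero_less_mult_iff mult_ac)
  then have scaled: "(\<integral>\<^sup>+ t. G (d * t) \<partial>lborel)
                       = ennreal (d powr \<beta>) * weighted_L1 \<beta> (\<lambda>t. g (d * t)) T"
    unfolding weighted_L1_def
    using weighted_L1_integrand_measurable[OF \<open>continuous_on {0<..} (\<lambda>t. g (d * t))\<close>]
    by (simp add: nn_integral_cmult)
  have "G \<in> borel_measurable borel"
    unfolding G_def by (rule weighted_L1_integrand_measurable[OF assms(2)])
  then have "weighted_L1 \<beta> g (d * T) = ennreal d * (\<integral>\<^sup>+ t. G (d * t) \<partial>lborel)"
    using nn_integral_real_affine[of G d 0] assms(1) by (simp add: weighted_L1_def G_def)
  also have "\<dots> = ennreal (d * d powr \<beta>) * weighted_L1 \<beta> (\<lambda>t. g (d * t)) T"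
    using assms(1) by (simp add: scaled ennreal_mult mult.assoc)
  finally have "ennreal (d powr (-1 - \<beta>)) * weighted_L1 \<beta> g (d * T)
                  = ennreal (d powr (-1 - \<beta>) * (d * d powr \<beta>)) * weighted_L1 \<beta> (\<lambda>t. g (d * t)) T"
    using assms(1) by (simp add: ennreal_mult mult.assoc)
  also have "d powr (-1 - \<beta>) * (d * d powr \<beta>) = 1"
    using assms(1) by (simp add: powr_diff powr_minus field_simps)
  finally show ?thesis
    by simp
qed

lemma nn_integral_le_weighted_L1_add:
  assumes "continuous_on {0<..} g1" "continuous_on {0<..} g2" "a \<ge> 0"
    and "\<And>t. 0 < t \<Longrightarrow> t < T \<Longrightarrow> x t \<le> a * (\<bar>g1 t\<bar> * t powr \<beta>1 + \<bar>g2 t\<bar> * t powr \<beta>2)"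
  shows "(\<integral>\<^sup>+ t \<in> {0<..<T}. ennreal (x t) \<partial>lborel)
           \<le> ennreal a * (weighted_L1 \<beta>1 g1 T + weighted_L1 \<beta>2 g2 T)"
proof -
  let ?I = "\<lambda>g \<beta> t. ennreal (\<bar>g t\<bar> * t powr \<beta>) * indicator {0<..<T} t"
  have "(\<integral>\<^sup>+ t \<in> {0<..<T}. ennreal (x t) \<partial>lborel)
          \<le> (\<integral>\<^sup>+ t. ennreal a * (?I g1 \<beta>1 t + ?I g2 \<beta>2 t) \<partial>lborel)"
  proof (rule nn_integral_mono)
    fix t
    show "ennreal (x t) * indicator {0<..<T} t \<le> ennreal a * (?I g1 \<beta>1 t + ?I g2 \<beta>2 t)"
    proof (cases "0 < t \<and> t < T")
      case True
      then have "ennreal (x t) \<le> ennreal (a * (\<bar>g1 t\<bar> * t powr \<beta>1 + \<bar>g2 t\<bar> * t powr \<beta>2))"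
        using assms(4) by (intro ennreal_leI) auto
      then show ?thesis
        using True assms(3) by (simp add: ennreal_mult ennreal_plus)
    qed auto
  qed
  also have "\<dots> = ennreal a * (weighted_L1 \<beta>1 g1 T + weighted_L1 \<beta>2 g2 T)"
    using weighted_L1_integrand_measurable[OF assms(1)]
      weighted_L1_integrand_measurable[OF assms(2)]
    by (simp add: nn_integral_cmult nn_integral_add weighted_L1_def)
  finally show ?thesis .
qed

lemma weighted_L1_le_head_add_bound:
  assumes "continuous_on {0<..} g" and "\<And>t. S \<le> t \<Longrightarrow> t < T \<Longrightarrow> \<bar>g t\<bar> \<le> M"
  shows "weighted_L1 \<beta> g T \<le> weighted_L1 \<beta> g S + weighted_L1 \<beta> (\<lambda>_. M) T"
proof -
  let ?I = "\<lambda>g S t. ennreal (\<bar>g t\<bar> * t powr \<beta>) * indicator {0<..<S} t"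
  have "weighted_L1 \<beta> g T \<le> (\<integral>\<^sup>+ t. ?I g S t + ?I (\<lambda>_. M) T t \<partial>lborel)"
    unfolding weighted_L1_def
  proof (rule nn_integral_mono)
    fix t
    show "?I g T t \<le> ?I g S t + ?I (\<lambda>_. M) T t"
    proof (cases "0 < t \<and> t < T \<and> S \<le> t")
      case True
      then have "\<bar>g t\<bar> * t powr \<beta> \<le> \<bar>M\<bar> * t powr \<beta>"
        using assms(2)[of t] by (intro mult_right_mono) auto
      then show ?thesis
        using True by (simp add: ennreal_leI add_increasing)
    qed (auto simp: indicator_def)
  qed
  also have "\<dots> = weighted_L1 \<beta> g S + weighted_L1 \<beta> (\<lambda>_. M) T"
    using weighted_L1_integrand_measurable[OF assms(1)] weighted_L1_integrand_measurable[of "\<lambda>_. M"]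
    by (simp add: weighted_L1_def nn_integral_add)
  finally show ?thesis .
qed

lemma ennreal_mult_add_le:
  fixes a c A B :: ennreal
  shows "a * A + c * B \<le> (a + c) * (A + B)"
proof -
  have "(a + c) * (A + B) = a * A + c * B + (a * B + c * A)"
    by (simp add: algebra_simps)
  then show ?thesis
    by simp
qed

lemma npow_mult_powr_le_add:
  fixes x y t \<alpha> a b \<beta> :: real
  assumes "x \<ge> 0" "y \<ge> 0" "t > 0" "0 \<le> \<alpha>" "\<alpha> \<le> 1"
  shows "npow x \<alpha> * npow y (1 - \<alpha>) * t powr (a * \<alpha> + b * (1 - \<alpha>) + \<beta>)
           \<le> x * t powr (a + \<beta>) + y * t powr (b + \<beta>)"
proof -
  consider "\<alpha> = 0" | "\<alpha> = 1" | "0 < \<alpha>" "\<alpha> < 1"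
    using assms by linarith
  then show ?thesis
  proof cases
    case 3
    define X Y where "X = x * t powr a" and "Y = y * t powr b"
    have "X \<ge> 0" "Y \<ge> 0"
      using assms by (simp_all add: X_def Y_def)
    have "npow x \<alpha> * npow y (1 - \<alpha>) * t powr (a * \<alpha> + b * (1 - \<alpha>) + \<beta>)
            = X powr \<alpha> * Y powr (1 - \<alpha>) * t powr \<beta>"
      using 3 assms by (simp add: npow_def X_def Y_def powr_add powr_mult powr_powr mult_ac)
    also have "\<dots> \<le> max X Y powr \<alpha> * max X Y powr (1 - \<alpha>) * t powr \<beta>"
      using 3 \<open>X \<ge> 0\<close> \<open>Y \<ge> 0\<close> by (intro mult_right_mono mult_mono powr_mono2) auto
    also have "\<dots> = max X Y * t powr \<beta>"
      using \<open>X \<ge> 0\<close> by (simp flip: powr_add)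
    also have "\<dots> \<le> (X + Y) * t powr \<beta>"
      using \<open>X \<ge> 0\<close> \<open>Y \<ge> 0\<close> by (intro mult_right_mono) auto
    finally show ?thesis
      by (simp add: X_def Y_def powr_add algebra_simps)
  qed (use assms in \<open>simp_all add: npow_def powr_add\<close>)
qed

definition dilation_const :: "real \<Rightarrow> real \<Rightarrow> real" where
  "dilation_const \<beta> d = d powr (-1 - \<beta>) + 2 * d * 2 powr (1 + \<beta>) + (1 + 4 * d) / (1 + \<beta>)"

lemma dilation_const_pos: "\<beta> > -1 \<Longrightarrow> d > 0 \<Longrightarrow> dilation_const \<beta> d > 0"
  unfolding dilation_const_def by (intro add_pos_pos) auto

definition deriv_dilation_const :: "real \<Rightarrow> real \<Rightarrow> nat \<Rightarrow> real" where
  "deriv_dilation_const \<beta> c k = 2 ^ (\<Sum>i\<le>k. i) / c ^ k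
     * (dilation_const \<beta> (c / 2 ^ k) + dilation_const \<beta> (c / 2 ^ (k - 1)))"

lemma deriv_dilation_const_pos: "\<beta> > -1 \<Longrightarrow> c > 0 \<Longrightarrow> deriv_dilation_const \<beta> c k > 0"
  unfolding deriv_dilation_const_def by (intro mult_pos_pos add_pos_pos dilation_const_pos) auto

locale neg_deriv_completely_monotone =
  fixes f :: "real \<Rightarrow> real"
  assumes differentiable: "\<And>t. t > 0 \<Longrightarrow> f differentiable (at t)"
    and completely_monotone_neg_deriv: "completely_monotone (\<lambda>t. - deriv f t)"
begin

lemma has_real_derivative_funpow_neg_deriv:
  assumes "t > 0"
  shows "((deriv ^^ j) (\<lambda>t. - deriv f t) has_real_derivative
           (deriv ^^ Suc j) (\<lambda>t. - deriv f t) t) (at t)"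
  using completely_monotone_neg_deriv assms
  by (simp add: completely_monotone_def DERIV_deriv_iff_real_differentiable)

lemma deriv_funpow_Suc_eq:
  assumes "t > 0"
  shows "(deriv ^^ Suc j) f t = - (deriv ^^ j) (\<lambda>t. - deriv f t) t"
  using assms
proof (induction j arbitrary: t)
  case 0
  then show ?case by simp
next
  case (Suc j)
  let ?g = "(deriv ^^ j) (\<lambda>t. - deriv f t)"
  have "\<forall>\<^sub>F x in nhds t. x > 0"
    using Suc.prems by (intro eventually_nhds_in_open[of "{0<..}", simplified]) auto
  then have "\<forall>\<^sub>F x in nhds t. (deriv ^^ Suc j) f x = - ?g x"
    by eventually_elim (rule Suc.IH)
  then have "deriv ((deriv ^^ Suc j) f) t = deriv (\<lambda>x. - ?g x) t"
    by (rule deriv_cong_ev) simp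
  also have "\<dots> = - (deriv ^^ Suc j) (\<lambda>t. - deriv f t) t"
    using has_real_derivative_funpow_neg_deriv[OF Suc.prems, of j]
    by (intro DERIV_imp_deriv DERIV_minus)
  finally show ?case by simp
qed

lemma has_real_derivative_deriv_funpow:
  assumes "t > 0"
  shows "((deriv ^^ k) f has_real_derivative (deriv ^^ Suc k) f t) (at t)"
proof (cases k)
  case 0
  then show ?thesis
    using differentiable[OF assms] by (simp add: DERIV_deriv_iff_real_differentiable)
next
  case (Suc j)
  let ?g = "(deriv ^^ j) (\<lambda>t. - deriv f t)"
  have "\<forall>\<^sub>F x in nhds t. x > 0"
    using assms by (intro eventually_nhds_in_open[of "{0<..}", simplified]) auto
  then have "\<forall>\<^sub>F x in nhds t. (deriv ^^ k) f x = - ?g x"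
    by eventually_elim (simp only: Suc deriv_funpow_Suc_eq)
  moreover have "((\<lambda>x. - ?g x) has_real_derivative (deriv ^^ Suc k) f t) (at t)"
    using DERIV_minus[OF has_real_derivative_funpow_neg_deriv[OF assms, of j]]
    by (simp only: Suc deriv_funpow_Suc_eq[OF assms])
  ultimately show ?thesis
    by (simp only: DERIV_cong_ev[OF refl _ refl])
qed

lemma continuous_on_deriv_funpow: "continuous_on {0<..} ((deriv ^^ k) f)"
  by (meson DERIV_isCont continuous_at_imp_continuous_on greaterThan_iff
      has_real_derivative_deriv_funpow)

lemma abs_deriv_funpow:
  assumes "t > 0" "k \<ge> 1"
  shows "\<bar>(deriv ^^ k) f t\<bar> = (-1) ^ k * (deriv ^^ k) f t"
proof -
  obtain j where k: "k = Suc j" using assms(2) by (cases k) auto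
  have "0 \<le> (-1) ^ j * (deriv ^^ j) (\<lambda>t. - deriv f t) t"
    using completely_monotone_neg_deriv assms(1) by (simp add: completely_monotone_def)
  then have "0 \<le> (-1) ^ k * (deriv ^^ k) f t"
    using deriv_funpow_Suc_eq[OF assms(1), of j] k by simp
  moreover have "\<bar>(deriv ^^ k) f t\<bar> = \<bar>(-1) ^ k * (deriv ^^ k) f t\<bar>"
    by (simp add: abs_mult)
  ultimately show ?thesis
    by simp
qed

lemma continuous_on_deriv_funpow_scaled:
  assumes "c > 0"
  shows "continuous_on {0<..} (\<lambda>t. (deriv ^^ k) f (c * t))"
  using assms
  by (intro continuous_on_compose2[OF continuous_on_deriv_funpow]) (auto intro!: continuous_intros)

lemma neg_one_power_deriv_funpow_antimono:
  assumes "0 < x" "x \<le> y"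
  shows "(-1) ^ k * (deriv ^^ k) f y \<le> (-1) ^ k * (deriv ^^ k) f x"
proof (rule deriv_nonpos_imp_antimono[where g = "\<lambda>s. (-1) ^ k * (deriv ^^ k) f s"
                                           and g' = "\<lambda>s. (-1) ^ k * (deriv ^^ Suc k) f s"])
  fix s assume "s \<in> {x..y}"
  then have "s > 0" using assms by auto
  then show "((\<lambda>s. (-1) ^ k * (deriv ^^ k) f s) has_real_derivative
               (-1) ^ k * (deriv ^^ Suc k) f s) (at s)"
    by (intro DERIV_cmult has_real_derivative_deriv_funpow[OF \<open>s > 0\<close>])
  show "(-1) ^ k * (deriv ^^ Suc k) f s \<le> 0"
    using abs_deriv_funpow[OF \<open>s > 0\<close>, of "Suc k"] by simp
qed (rule assms)

lemma decreasing:
  assumes "0 < x" "x \<le> y"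
  shows "f y \<le> f x"
  using neg_one_power_deriv_funpow_antimono[OF assms, of 0] by simp

lemma abs_deriv_funpow_antimono:
  assumes "0 < x" "x \<le> y" "k \<ge> 1"
  shows "\<bar>(deriv ^^ k) f y\<bar> \<le> \<bar>(deriv ^^ k) f x\<bar>"
  using neg_one_power_deriv_funpow_antimono[OF assms(1,2), of k] assms
  by (simp add: abs_deriv_funpow)

lemma abs_deriv_funpow_Suc_mult_diff_le:
  assumes "0 < q" "q \<le> r"
  shows "\<bar>(deriv ^^ Suc k) f r\<bar> * (r - q) \<le> (-1) ^ k * ((deriv ^^ k) f q - (deriv ^^ k) f r)"
proof -
  define a where "a = \<bar>(deriv ^^ Suc k) f r\<bar>"
  have "(-1) ^ k * (deriv ^^ k) f r + a * r \<le> (-1) ^ k * (deriv ^^ k) f q + a * q"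
  proof (rule deriv_nonpos_imp_antimono[where g = "\<lambda>s. (-1) ^ k * (deriv ^^ k) f s + a * s"
                                             and g' = "\<lambda>s. (-1) ^ k * (deriv ^^ Suc k) f s + a"])
    fix s assume s: "s \<in> {q..r}"
    then have "s > 0" using assms by auto
    then show "((\<lambda>s. (-1) ^ k * (deriv ^^ k) f s + a * s) has_real_derivative
                 (-1) ^ k * (deriv ^^ Suc k) f s + a) (at s)"
      by (auto intro!: derivative_eq_intros DERIV_cmult has_real_derivative_deriv_funpow)
    have "a \<le> \<bar>(deriv ^^ Suc k) f s\<bar>"
      unfolding a_def using s \<open>s > 0\<close> by (intro abs_deriv_funpow_antimono) auto
    then show "(-1) ^ k * (deriv ^^ Suc k) f s + a \<le> 0"
      using abs_deriv_funpow[OF \<open>s > 0\<close>, of "Suc k"] by simp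
  qed (rule assms)
  then show ?thesis
    unfolding a_def by (simp add: algebra_simps)
qed

lemma abs_deriv_funpow_Suc_mult_power_le:
  assumes "s > 0"
  shows "\<bar>(deriv ^^ Suc j) f s\<bar> * s ^ Suc j
           \<le> 2 ^ (\<Sum>i\<le>Suc j. i) * (\<bar>f (s / 2 ^ Suc j)\<bar> + \<bar>f (s / 2 ^ j)\<bar>)"
  using assms
proof (induction j arbitrary: s)
  case 0
  have "\<bar>deriv f s\<bar> * (s - s / 2) \<le> f (s / 2) - f s"
    using abs_deriv_funpow_Suc_mult_diff_le[of "s / 2" s 0] \<open>s > 0\<close> by simp
  then show ?case by simp
next
  case (Suc j)
  have "\<bar>(deriv ^^ Suc (Suc j)) f s\<bar> * (s - s / 2)
          \<le> (-1) ^ Suc j * ((deriv ^^ Suc j) f (s / 2) - (deriv ^^ Suc j) f s)"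
    using Suc.prems by (intro abs_deriv_funpow_Suc_mult_diff_le) auto
  also have "\<dots> = \<bar>(deriv ^^ Suc j) f (s / 2)\<bar> - \<bar>(deriv ^^ Suc j) f s\<bar>"
    using abs_deriv_funpow[of "s / 2" "Suc j"] abs_deriv_funpow[of s "Suc j"] Suc.prems
    by (simp add: right_diff_distrib)
  finally have "\<bar>(deriv ^^ Suc (Suc j)) f s\<bar> * (s - s / 2) \<le> \<bar>(deriv ^^ Suc j) f (s / 2)\<bar>"
    by simp
  then have "\<bar>(deriv ^^ Suc (Suc j)) f s\<bar> * s ^ Suc (Suc j)
               \<le> 2 ^ Suc (Suc j) * (\<bar>(deriv ^^ Suc j) f (s / 2)\<bar> * (s / 2) ^ Suc j)"
    using Suc.prems by (simp add: power_divide mult_right_mono field_simps)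
  also have "\<dots> \<le> 2 ^ Suc (Suc j)
                     * (2 ^ (\<Sum>i\<le>Suc j. i) * (\<bar>f (s / 2 / 2 ^ Suc j)\<bar> + \<bar>f (s / 2 / 2 ^ j)\<bar>))"
    using Suc.IH[of "s / 2"] Suc.prems by (intro mult_left_mono) auto
  finally show ?case
    by (simp add: power_add mult_ac)
qed

lemma abs_le_tangent:
  assumes "0 < T" "T \<le> s"
  shows "\<bar>f s\<bar> \<le> \<bar>f T\<bar> + \<bar>deriv f T\<bar> * (s - T)"
proof -
  have "f T + \<bar>deriv f T\<bar> * T \<le> f s + \<bar>deriv f T\<bar> * s"
  proof (rule deriv_nonneg_imp_mono[where g = "\<lambda>x. f x + \<bar>deriv f T\<bar> * x"
                                         and g' = "\<lambda>x. deriv f x + \<bar>deriv f T\<bar>"])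
    fix x assume x: "x \<in> {T..s}"
    then have "x > 0" using assms by auto
    then have "(f has_real_derivative deriv f x) (at x)"
      using has_real_derivative_deriv_funpow[of x 0] by simp
    then show "((\<lambda>x. f x + \<bar>deriv f T\<bar> * x) has_real_derivative deriv f x + \<bar>deriv f T\<bar>) (at x)"
      by (auto intro!: derivative_eq_intros)
    show "deriv f x + \<bar>deriv f T\<bar> \<ge> 0"
      using abs_deriv_funpow_antimono[of T x 1] abs_deriv_funpow[OF \<open>x > 0\<close>, of 1] x assms by simp
  qed (rule assms)
  moreover have "f s \<le> f T"
    using decreasing assms by blast
  moreover have "0 \<le> \<bar>deriv f T\<bar> * (s - T)"
    using assms by simp
  ultimately show ?thesis
    by (simp add: algebra_simps abs_le_iff)
qed

lemma abs_deriv_mult_le: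
  assumes "T > 0"
  shows "\<bar>deriv f T\<bar> * T \<le> 2 * (\<bar>f (T / 2)\<bar> + \<bar>f T\<bar>)"
proof -
  have "\<bar>deriv f T\<bar> * (T - T / 2) \<le> f (T / 2) - f T"
    using abs_deriv_funpow_Suc_mult_diff_le[of "T / 2" T 0] assms by simp
  then show ?thesis
    by (simp add: field_simps)
qed

lemma abs_le_beyond:
  assumes "0 < T" "T \<le> s" "s \<le> d * T"
  shows "\<bar>f s\<bar> \<le> (1 + 2 * d) * \<bar>f T\<bar> + 2 * d * \<bar>f (T / 2)\<bar>"
proof -
  have "1 \<le> d"
    using assms mult_le_cancel_right1[of T d] by linarith
  have "\<bar>deriv f T\<bar> * (s - T) \<le> \<bar>deriv f T\<bar> * (d * T)"
    using assms by (intro mult_left_mono) auto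
  also have "\<dots> \<le> d * (2 * (\<bar>f (T / 2)\<bar> + \<bar>f T\<bar>))"
    using abs_deriv_mult_le[OF assms(1)] \<open>1 \<le> d\<close> by (simp add: mult.left_commute)
  finally show ?thesis
    using abs_le_tangent[OF assms(1,2)] by (simp add: algebra_simps)
qed

lemma midpoint_value_le_weighted_L1:
  assumes "\<beta> > -1" "T > 0"
  shows "ennreal (\<bar>f (T / 2)\<bar> * T powr (1 + \<beta>))
           \<le> ennreal ((1 + \<beta>) * 2 powr (1 + \<beta>)) * weighted_L1 \<beta> f T
              + ennreal (\<bar>f T\<bar> * T powr (1 + \<beta>))"
proof -
  define R where "R = (T / 2) powr (1 + \<beta>) / (1 + \<beta>)"
  define c where "c = (1 + \<beta>) * 2 powr (1 + \<beta>)"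
  have "c > 0" "R \<ge> 0" and c_R: "c * R = T powr (1 + \<beta>)"
    using assms by (simp_all add: c_def R_def powr_divide)
  have "ennreal (\<bar>f (T / 2)\<bar> * R) = weighted_L1 \<beta> (\<lambda>_. f (T / 2)) (T / 2)"
    using weighted_L1_const assms by (simp add: R_def)
  also have "\<dots> \<le> ennreal 1 * (weighted_L1 \<beta> f (T / 2) + weighted_L1 \<beta> (\<lambda>_. f T) (T / 2))"
    unfolding weighted_L1_def[of _ "\<lambda>_. f (T / 2)"]
  proof (rule nn_integral_le_weighted_L1_add)
    show "continuous_on {0<..} f"
      using continuous_on_deriv_funpow[of 0] by simp
    fix t assume "0 < t" "t < T / 2"
    then have "f T \<le> f (T / 2)" "f (T / 2) \<le> f t"
      using assms by (auto intro!: decreasing)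
    then show "\<bar>f (T / 2)\<bar> * t powr \<beta> \<le> 1 * (\<bar>f t\<bar> * t powr \<beta> + \<bar>f T\<bar> * t powr \<beta>)"
      by (simp add: mult_right_mono flip: distrib_right)
  qed auto
  also have "\<dots> \<le> weighted_L1 \<beta> f T + ennreal (\<bar>f T\<bar> * R)"
    using weighted_L1_mono[of "T / 2" T] weighted_L1_const assms by (simp add: add_right_mono R_def)
  finally have "ennreal c * ennreal (\<bar>f (T / 2)\<bar> * R)
                  \<le> ennreal c * (weighted_L1 \<beta> f T + ennreal (\<bar>f T\<bar> * R))"
    by (rule mult_left_mono) simp
  moreover have "ennreal c * ennreal (\<bar>g\<bar> * R) = ennreal (\<bar>g\<bar> * T powr (1 + \<beta>))" for g
    using \<open>c > 0\<close> \<open>R \<ge> 0\<close> by (simp add: c_R[symmetric] mult_ac flip: ennreal_mult)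
  ultimately show ?thesis
    unfolding distrib_left c_def by simp
qed

lemma weighted_L1_beyond_bound_le:
  assumes "\<beta> > -1" "d > 0" "T > 0"
  shows "weighted_L1 \<beta> (\<lambda>_. (1 + 2 * d) * \<bar>f T\<bar> + 2 * d * \<bar>f (T / 2)\<bar>) T
           \<le> ennreal (2 * d * 2 powr (1 + \<beta>)) * weighted_L1 \<beta> f T
              + ennreal ((1 + 4 * d) / (1 + \<beta>)) * ennreal (\<bar>f T\<bar> * T powr (1 + \<beta>))"
proof -
  define A B P where "A = weighted_L1 \<beta> f T" and "B = ennreal (\<bar>f T\<bar> * T powr (1 + \<beta>))"
    and "P = T powr (1 + \<beta>)"
  define b q where "b = 1 + \<beta>" and "q = (2::real) powr (1 + \<beta>)"
  have "b > 0" "q > 0"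
    using assms by (simp_all add: b_def q_def)
  have "\<bar>(1 + 2 * d) * \<bar>f T\<bar> + 2 * d * \<bar>f (T / 2)\<bar>\<bar> * (P / b)
          = (1 + 2 * d) / b * (\<bar>f T\<bar> * P) + 2 * d / b * (\<bar>f (T / 2)\<bar> * P)"
    using assms \<open>b > 0\<close> by (simp add: field_simps)
  then have "weighted_L1 \<beta> (\<lambda>_. (1 + 2 * d) * \<bar>f T\<bar> + 2 * d * \<bar>f (T / 2)\<bar>) T
               = ennreal ((1 + 2 * d) / b) * B + ennreal (2 * d / b) * ennreal (\<bar>f (T / 2)\<bar> * P)"
    using weighted_L1_const[OF assms(1,3)] assms \<open>b > 0\<close>
    by (simp add: B_def P_def b_def ennreal_plus flip: ennreal_mult)
  also have "\<dots> \<le> ennreal ((1 + 2 * d) / b) * B + ennreal (2 * d / b) * (ennreal (b * q) * A + B)"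
    using midpoint_value_le_weighted_L1[OF assms(1,3)]
    by (intro add_left_mono mult_left_mono) (simp_all add: A_def B_def P_def b_def q_def)
  also have "\<dots> = ennreal (2 * d / b) * ennreal (b * q) * A
                   + (ennreal ((1 + 2 * d) / b) + ennreal (2 * d / b)) * B"
    by (simp only: distrib_left distrib_right mult.assoc add_ac)
  also have "ennreal (2 * d / b) * ennreal (b * q) = ennreal (2 * d * q)"
    using assms \<open>b > 0\<close> \<open>q > 0\<close> by (simp flip: ennreal_mult)
  also have "ennreal ((1 + 2 * d) / b) + ennreal (2 * d / b) = ennreal ((1 + 4 * d) / b)"
    using assms \<open>b > 0\<close> by (simp add: add_divide_distrib flip: ennreal_plus)
  finally show ?thesis
    by (simp add: A_def B_def b_def q_def)
qed

lemma weighted_L1_dilation_le: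
  assumes "\<beta> > -1" "d > 0" "T > 0"
  shows "weighted_L1 \<beta> (\<lambda>t. f (d * t)) T
           \<le> ennreal (dilation_const \<beta> d) * weighted_L1_with_endpoint \<beta> f T"
proof -
  define M where "M = (1 + 2 * d) * \<bar>f T\<bar> + 2 * d * \<bar>f (T / 2)\<bar>"
  have "weighted_L1 \<beta> (\<lambda>t. f (d * t)) T
          \<le> weighted_L1 \<beta> (\<lambda>t. f (d * t)) (T / d) + weighted_L1 \<beta> (\<lambda>_. M) T"
    using continuous_on_deriv_funpow_scaled[OF assms(2), of 0] abs_le_beyond assms
    by (intro weighted_L1_le_head_add_bound) (auto simp: M_def field_simps)
  also have "\<dots> \<le> ennreal (d powr (-1 - \<beta>)) * weighted_L1 \<beta> f T
                   + (ennreal (2 * d * 2 powr (1 + \<beta>)) * weighted_L1 \<beta> f T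
                      + ennreal ((1 + 4 * d) / (1 + \<beta>)) * ennreal (\<bar>f T\<bar> * T powr (1 + \<beta>)))"
    using weighted_L1_compose_scale[OF assms(2), of f \<beta> "T / d"] continuous_on_deriv_funpow[of 0]
      weighted_L1_beyond_bound_le[OF assms] assms
    by (simp add: M_def add_left_mono)
  also have "\<dots> = ennreal (d powr (-1 - \<beta>) + 2 * d * 2 powr (1 + \<beta>)) * weighted_L1 \<beta> f T
                   + ennreal ((1 + 4 * d) / (1 + \<beta>)) * ennreal (\<bar>f T\<bar> * T powr (1 + \<beta>))"
    using assms by (simp add: ennreal_plus distrib_right add.assoc)
  also have "\<dots> \<le> ennreal (dilation_const \<beta> d) * weighted_L1_with_endpoint \<beta> f T"
    using ennreal_mult_add_le assms
    by (simp add: dilation_const_def weighted_L1_with_endpoint_def ennreal_plus)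
  finally show ?thesis .
qed

lemma weighted_L1_deriv_funpow_dilation_le:
  assumes "\<beta> > -1" "c > 0" "T > 0" "k \<ge> 1"
  shows "weighted_L1 (real k + \<beta>) (\<lambda>t. (deriv ^^ k) f (c * t)) T
           \<le> ennreal (deriv_dilation_const \<beta> c k) * weighted_L1_with_endpoint \<beta> f T"
proof -
  obtain j where k: "k = Suc j"
    using assms(4) by (cases k) auto
  define \<kappa> where "\<kappa> = 2 ^ (\<Sum>i\<le>Suc j. i) / c ^ Suc j"
  define d1 d2 where "d1 = c / 2 ^ Suc j" and "d2 = c / 2 ^ j"
  have "d1 > 0" "d2 > 0" "\<kappa> \<ge> 0"
    using assms by (simp_all add: d1_def d2_def \<kappa>_def)
  have "weighted_L1 (real (Suc j) + \<beta>) (\<lambda>t. (deriv ^^ Suc j) f (c * t)) T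
          \<le> ennreal \<kappa> * (weighted_L1 \<beta> (\<lambda>t. f (d1 * t)) T + weighted_L1 \<beta> (\<lambda>t. f (d2 * t)) T)"
    unfolding weighted_L1_def[of "real (Suc j) + \<beta>"]
  proof (rule nn_integral_le_weighted_L1_add)
    show "continuous_on {0<..} (\<lambda>t. f (d1 * t))" "continuous_on {0<..} (\<lambda>t. f (d2 * t))"
      using continuous_on_deriv_funpow_scaled[OF \<open>d1 > 0\<close>, of 0]
        continuous_on_deriv_funpow_scaled[OF \<open>d2 > 0\<close>, of 0] by simp_all
    show "\<kappa> \<ge> 0" by fact
    fix t :: real assume "0 < t"
    have "\<bar>(deriv ^^ Suc j) f (c * t)\<bar> * t powr (real (Suc j) + \<beta>)
            = \<bar>(deriv ^^ Suc j) f (c * t)\<bar> * (c * t) ^ Suc j / c ^ Suc j * t powr \<beta>"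
      using \<open>0 < t\<close> assms by (simp add: powr_add powr_realpow power_mult_distrib)
    also have "\<dots> \<le> 2 ^ (\<Sum>i\<le>Suc j. i) * (\<bar>f (d1 * t)\<bar> + \<bar>f (d2 * t)\<bar>) / c ^ Suc j * t powr \<beta>"
      using abs_deriv_funpow_Suc_mult_power_le[of "c * t" j] \<open>0 < t\<close> assms
      by (intro mult_right_mono divide_right_mono) (simp_all add: d1_def d2_def)
    also have "\<dots> = \<kappa> * (\<bar>f (d1 * t)\<bar> * t powr \<beta> + \<bar>f (d2 * t)\<bar> * t powr \<beta>)"
      by (simp add: \<kappa>_def algebra_simps)
    finally show "\<bar>(deriv ^^ Suc j) f (c * t)\<bar> * t powr (real (Suc j) + \<beta>)
                    \<le> \<kappa> * (\<bar>f (d1 * t)\<bar> * t powr \<beta> + \<bar>f (d2 * t)\<bar> * t powr \<beta>)" .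
  qed
  also have "\<dots> \<le> ennreal \<kappa> * (ennreal (dilation_const \<beta> d1) * weighted_L1_with_endpoint \<beta> f T
                                + ennreal (dilation_const \<beta> d2) * weighted_L1_with_endpoint \<beta> f T)"
    using assms \<open>d1 > 0\<close> \<open>d2 > 0\<close>
    by (intro mult_left_mono add_mono weighted_L1_dilation_le) auto
  also have "\<dots> = ennreal (\<kappa> * (dilation_const \<beta> d1 + dilation_const \<beta> d2))
                   * weighted_L1_with_endpoint \<beta> f T"
    using \<open>\<kappa> \<ge> 0\<close> dilation_const_pos[OF assms(1) \<open>d1 > 0\<close>]
      dilation_const_pos[OF assms(1) \<open>d2 > 0\<close>]
    by (simp add: ennreal_mult ennreal_plus distrib_left distrib_right mult.assoc)
  also have "\<kappa> * (dilation_const \<beta> d1 + dilation_const \<beta> d2) = deriv_dilation_const \<beta> c k"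
    by (simp add: deriv_dilation_const_def \<kappa>_def d1_def d2_def k)
  finally show ?thesis
    unfolding k .
qed

lemma nn_integral_interpolation_deriv_deriv_le:
  assumes "0 \<le> \<alpha>" "\<alpha> \<le> 1" "\<beta> > -1" "m \<ge> 1" "n \<ge> 1" "c1 > 0" "c2 > 0" "T > 0"
  shows "(\<integral>\<^sup>+ t \<in> {0<..<T}.
            ennreal (npow \<bar>(deriv ^^ m) f (c1 * t)\<bar> \<alpha> * npow \<bar>(deriv ^^ n) f (c2 * t)\<bar> (1 - \<alpha>)
                     * t powr (real m * \<alpha> + real n * (1 - \<alpha>) + \<beta>)) \<partial>lborel)
           \<le> ennreal (deriv_dilation_const \<beta> c1 m + deriv_dilation_const \<beta> c2 n)
               * weighted_L1_with_endpoint \<beta> f T"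
proof -
  have "(\<integral>\<^sup>+ t \<in> {0<..<T}.
            ennreal (npow \<bar>(deriv ^^ m) f (c1 * t)\<bar> \<alpha> * npow \<bar>(deriv ^^ n) f (c2 * t)\<bar> (1 - \<alpha>)
                     * t powr (real m * \<alpha> + real n * (1 - \<alpha>) + \<beta>)) \<partial>lborel)
          \<le> ennreal 1 * (weighted_L1 (real m + \<beta>) (\<lambda>t. (deriv ^^ m) f (c1 * t)) T
                         + weighted_L1 (real n + \<beta>) (\<lambda>t. (deriv ^^ n) f (c2 * t)) T)"
    using assms
    by (intro nn_integral_le_weighted_L1_add continuous_on_deriv_funpow_scaled)
       (simp_all add: npow_mult_powr_le_add)
  also have "\<dots> \<le> ennreal (deriv_dilation_const \<beta> c1 m) * weighted_L1_with_endpoint \<beta> f T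
                   + ennreal (deriv_dilation_const \<beta> c2 n) * weighted_L1_with_endpoint \<beta> f T"
    using assms by (simp add: add_mono weighted_L1_deriv_funpow_dilation_le)
  also have "\<dots> = ennreal (deriv_dilation_const \<beta> c1 m + deriv_dilation_const \<beta> c2 n)
                   * weighted_L1_with_endpoint \<beta> f T"
    using assms deriv_dilation_const_pos
    by (simp add: ennreal_plus distrib_right less_imp_le)
  finally show ?thesis .
qed

lemma nn_integral_interpolation_value_deriv_le:
  assumes "0 \<le> \<alpha>" "\<alpha> \<le> 1" "\<beta> > -1" "n \<ge> 1" "c1 > 0" "c2 > 0" "T > 0"
  shows "(\<integral>\<^sup>+ t \<in> {0<..<T}.
            ennreal (npow \<bar>f (c1 * t)\<bar> \<alpha> * npow \<bar>(deriv ^^ n) f (c2 * t)\<bar> (1 - \<alpha>)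
                     * t powr (real n * (1 - \<alpha>) + \<beta>)) \<partial>lborel)
           \<le> ennreal (c1 powr (-1 - \<beta>) + deriv_dilation_const \<beta> c2 n)
               * (weighted_L1 \<beta> f (max c1 1 * T) + ennreal (\<bar>f T\<bar> * T powr (1 + \<beta>)))"
    (is "_ \<le> _ * ?E")
proof -
  have "weighted_L1 \<beta> f T \<le> weighted_L1 \<beta> f (max c1 1 * T)"
    using assms by (intro weighted_L1_mono) (simp add: max_def)
  then have endpoint: "weighted_L1_with_endpoint \<beta> f T \<le> ?E"
    unfolding weighted_L1_with_endpoint_def by (rule add_right_mono)
  have "weighted_L1 \<beta> (\<lambda>t. f (c1 * t)) T
          = ennreal (c1 powr (-1 - \<beta>)) * weighted_L1 \<beta> f (c1 * T)"
    using weighted_L1_compose_scale[OF assms(5), of f] continuous_on_deriv_funpow[of 0] by simp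
  also have "\<dots> \<le> ennreal (c1 powr (-1 - \<beta>)) * ?E"
    using assms by (intro mult_left_mono add_increasing2 weighted_L1_mono) auto
  finally have value_part: "weighted_L1 \<beta> (\<lambda>t. f (c1 * t)) T \<le> ennreal (c1 powr (-1 - \<beta>)) * ?E" .
  have "(\<integral>\<^sup>+ t \<in> {0<..<T}.
            ennreal (npow \<bar>f (c1 * t)\<bar> \<alpha> * npow \<bar>(deriv ^^ n) f (c2 * t)\<bar> (1 - \<alpha>)
                     * t powr (real n * (1 - \<alpha>) + \<beta>)) \<partial>lborel)
          \<le> ennreal 1 * (weighted_L1 \<beta> (\<lambda>t. f (c1 * t)) T
                         + weighted_L1 (real n + \<beta>) (\<lambda>t. (deriv ^^ n) f (c2 * t)) T)"
  proof (rule nn_integral_le_weighted_L1_add)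
    show "continuous_on {0<..} (\<lambda>t. f (c1 * t))"
      using continuous_on_deriv_funpow_scaled[OF assms(5), of 0] by simp
    fix t :: real assume "0 < t"
    then show "npow \<bar>f (c1 * t)\<bar> \<alpha> * npow \<bar>(deriv ^^ n) f (c2 * t)\<bar> (1 - \<alpha>)
                 * t powr (real n * (1 - \<alpha>) + \<beta>)
               \<le> 1 * (\<bar>f (c1 * t)\<bar> * t powr \<beta> + \<bar>(deriv ^^ n) f (c2 * t)\<bar> * t powr (real n + \<beta>))"
      using npow_mult_powr_le_add[of _ _ t \<alpha> 0 "real n" \<beta>] assms by simp
  qed (use assms continuous_on_deriv_funpow_scaled in auto)
  also have "\<dots> \<le> ennreal (c1 powr (-1 - \<beta>)) * ?E + ennreal (deriv_dilation_const \<beta> c2 n) * ?E"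
    using weighted_L1_deriv_funpow_dilation_le[of \<beta> c2 T n] value_part endpoint assms
    by (auto intro!: add_mono elim!: order_trans intro: mult_left_mono)
  also have "\<dots> = ennreal (c1 powr (-1 - \<beta>) + deriv_dilation_const \<beta> c2 n) * ?E"
    using assms deriv_dilation_const_pos
    by (simp add: ennreal_plus distrib_right less_imp_le)
  finally show ?thesis .
qed

end

theorem lemma6p5:
  fixes \<alpha> \<beta> c1 c2 :: real and m n :: nat
  assumes "0 \<le> \<alpha>" "\<alpha> \<le> 1" "\<beta> > -1" "m \<ge> 1" "n \<ge> 1" "c1 > 0" "c2 > 0"
  shows "\<exists>C>0. \<forall>(f :: real \<Rightarrow> real) t0.
    (t0 > 0 \<and> (\<forall>t>0. f differentiable (at t)) \<and>
     completely_monotone (\<lambda>t. - deriv f t) \<and>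
     (\<integral>\<^sup>+ t \<in> {0<..<t0}. ennreal (\<bar>f t\<bar> * t powr \<beta>) \<partial>lborel) < \<infinity>)
    \<longrightarrow>
    (\<integral>\<^sup>+ t \<in> {0<..<t0}.
        ennreal (npow \<bar>(deriv ^^ m) f (c1 * t)\<bar> \<alpha> * npow \<bar>(deriv ^^ n) f (c2 * t)\<bar> (1 - \<alpha>)
                 * t powr (real m * \<alpha> + real n * (1 - \<alpha>) + \<beta>)) \<partial>lborel)
      \<le> ennreal C * ((\<integral>\<^sup>+ t \<in> {0<..<t0}. ennreal (\<bar>f t\<bar> * t powr \<beta>) \<partial>lborel)
                      + ennreal (\<bar>f t0\<bar> * t0 powr (1 + \<beta>)))
    \<and>
    (\<integral>\<^sup>+ t \<in> {0<..<t0}.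
        ennreal (npow \<bar>f (c1 * t)\<bar> \<alpha> * npow \<bar>(deriv ^^ n) f (c2 * t)\<bar> (1 - \<alpha>)
                 * t powr (real n * (1 - \<alpha>) + \<beta>)) \<partial>lborel)
      \<le> ennreal C * ((\<integral>\<^sup>+ t \<in> {0<..<max c1 1 * t0}. ennreal (\<bar>f t\<bar> * t powr \<beta>) \<partial>lborel)
                      + ennreal (\<bar>f t0\<bar> * t0 powr (1 + \<beta>)))"
proof -
  define C where "C = deriv_dilation_const \<beta> c1 m + deriv_dilation_const \<beta> c2 n + c1 powr (-1 - \<beta>)"
  have C_ge: "deriv_dilation_const \<beta> c1 m + deriv_dilation_const \<beta> c2 n \<le> C"
    "c1 powr (-1 - \<beta>) + deriv_dilation_const \<beta> c2 n \<le> C"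
    using deriv_dilation_const_pos[OF assms(3,6), of m] by (simp_all add: C_def)
  have "C > 0"
    using deriv_dilation_const_pos[OF assms(3,6), of m]
      deriv_dilation_const_pos[OF assms(3,7), of n] assms(6)
    by (simp add: C_def add_pos_pos)
  show ?thesis
  proof (intro exI[of _ C] conjI allI impI \<open>C > 0\<close>, goal_cases)
    case (1 f t0)
    interpret neg_deriv_completely_monotone f
      using 1 by unfold_locales auto
    show ?case
      using nn_integral_interpolation_deriv_deriv_le[OF assms, of t0] 1
        mult_right_mono[OF ennreal_leI[OF C_ge(1)], of "weighted_L1_with_endpoint \<beta> f t0"]
      unfolding weighted_L1_with_endpoint_def weighted_L1_def by (meson order_trans zero_le)
  next
    case (2 f t0)
    interpret neg_deriv_completely_monotone f
      using 2 by unfold_locales auto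
    show ?case
      using nn_integral_interpolation_value_deriv_le[OF assms(1-3,5-7), of t0] 2
        mult_right_mono[OF ennreal_leI[OF C_ge(2)]]
      unfolding weighted_L1_def by (meson order_trans zero_le)
  qed
qed

end
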